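(* For every positive integer $n$: (i) $b^{2}_{3,4}(6n+4)\equiv 0\pmod 2$; (ii) $b^{2}_{3,4}(6n+2)\equiv b^{3}_{3}(n)\pmod 2$; (iii) $b^{2}_{3,4}(12n+6)\equiv 0\pmod 2$; (iv) $b^{2}_{3,4}(12n)\equiv p(n)\pmod 2$.
   Context: For integers $r\ge1$ write $f_r=\prod_{j\ge1}(1-q^{rj})$. $b^{2}_{3,4}(n)$ is the number of $2$-colored partitions of $n$ into parts not divisible by $3$ or $4$, i.e. $\sum_{n\ge0}b^2_{3,4}(n)q^n=\dfrac{f_3^2f_4^2}{f_1^2f_{12}^2}$. $b^{3}_{3}(n)$ is the number of $3$-colored partitions of $n$ into parts not divisible by $3$, i.e. $\sum_{n\ge0}b^3_3(n)q^n=\dfrac{f_3^3}{f_1^3}$. $p(n)$ is the ordinary partition function, $\sum_{n\ge0}p(n)q^n=1/f_1$. *)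

theory Defs
  imports Main "HOL-Library.Multiset" "HOL-Number_Theory.Cong"
begin

definition colored_partitions :: "nat \<Rightarrow> (nat \<Rightarrow> bool) \<Rightarrow> nat \<Rightarrow> (nat \<times> nat) multiset set" where
  "colored_partitions k P n =
     {M. (\<forall>x\<in>#M. 0 < fst x \<and> P (fst x) \<and> snd x < k) \<and> sum_mset (image_mset fst M) = n}"

definition b2_34 :: "nat \<Rightarrow> nat" where
  "b2_34 n = card (colored_partitions 2 (\<lambda>a. \<not> 3 dvd a \<and> \<not> 4 dvd a) n)"

definition b3_3 :: "nat \<Rightarrow> nat" where
  "b3_3 n = card (colored_partitions 3 (\<lambda>a. \<not> 3 dvd a) n)"

definition part_count :: "nat \<Rightarrow> nat" where
  "part_count n = card (colored_partitions 1 (\<lambda>_. True) n)"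

end

theory Submission
  imports Defs "HOL-Computational_Algebra.Formal_Power_Series" "HOL-Library.Z2"
begin

unbundle fps_syntax

(*
  Modulo 2 one has f_4 = f_1^4 and f_12 = f_3^4, so the generating function of b^2_{3,4} becomes
  (f_1^3/f_3^3)(q^2): b^2_{3,4}(2m) is the coefficient of q^m in f_1^3/f_3^3.  Euler's pentagonal
  number theorem and Jacobi's identity read f_1 = sum_k q^(k(3k+1)/2) and f_1^3 = sum_k q^(k(2k+1))
  modulo 2 (k ranging over the integers), and splitting the exponents k(2k+1) by their residue
  mod 3 gives f_1^3 = f_3 + q f_9^3.  Hence f_1^3/f_3^3 = 1/f_6 + q (f_3^3/f_1^3)(q^3) modulo 2:
  the coefficients of q^(3m+2) vanish, those of q^(3m+1) are b^3_3(m), and those of q^(3m) are the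
  coefficients of q^m in 1/f_2, i.e. 0 for odd m and p(m/2) for even m.

  Both identities modulo 2 are the cases r = 3, 4 of the triple product
  prod_m (1 - q^(rm)) (1 + q^(rm-1)) (1 + q^(rm-r+1)) = sum_k q^(rk(k+1)/2 - k), obtained from a
  finite version (via the q-binomial theorem) by letting the number of factors grow.  Infinite
  products are represented by finite products up to a degree L, which already determine all
  coefficients below L + 1.
*)

section \<open>Power series agreeing below a given degree\<close>

definition trunc_eq :: "nat \<Rightarrow> 'a::comm_ring_1 fps \<Rightarrow> 'a fps \<Rightarrow> bool" where
  "trunc_eq N f g \<longleftrightarrow> (\<forall>i<N. f $ i = g $ i)"

lemma trunc_eq_refl [simp]: "trunc_eq N f f"
  by (simp add: trunc_eq_def)

lemma trunc_eq_sym: "trunc_eq N f g \<Longrightarrow> trunc_eq N g f"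
  by (simp add: trunc_eq_def)

lemma trunc_eq_trans [trans]: "trunc_eq N f g \<Longrightarrow> trunc_eq N g h \<Longrightarrow> trunc_eq N f h"
  by (simp add: trunc_eq_def)

lemma trunc_eq_mono: "trunc_eq N f g \<Longrightarrow> M \<le> N \<Longrightarrow> trunc_eq M f g"
  by (simp add: trunc_eq_def)

lemma trunc_eq_coeff: "trunc_eq N f g \<Longrightarrow> i < N \<Longrightarrow> f $ i = g $ i"
  by (simp add: trunc_eq_def)

lemma trunc_eq_add: "trunc_eq N f g \<Longrightarrow> trunc_eq N h k \<Longrightarrow> trunc_eq N (f + h) (g + k)"
  by (simp add: trunc_eq_def)

lemma trunc_eq_mult: "trunc_eq N f g \<Longrightarrow> trunc_eq N h k \<Longrightarrow> trunc_eq N (f * h) (g * k)"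
  unfolding trunc_eq_def fps_mult_nth by (auto intro!: sum.cong)

lemma trunc_eq_prod:
  "(\<And>x. x \<in> S \<Longrightarrow> trunc_eq N (f x) (g x)) \<Longrightarrow> trunc_eq N (prod f S) (prod g S)"
  by (induction S rule: infinite_finite_induct) (auto intro: trunc_eq_mult)

lemma trunc_eq_sum:
  "(\<And>x. x \<in> S \<Longrightarrow> trunc_eq N (f x) (g x)) \<Longrightarrow> trunc_eq N (sum f S) (sum g S)"
  by (induction S rule: infinite_finite_induct) (auto intro: trunc_eq_add)

lemma trunc_eq_power: "trunc_eq N f g \<Longrightarrow> trunc_eq N (f ^ k) (g ^ k)"
  by (induction k) (auto intro: trunc_eq_mult)

lemma trunc_eq_Xpow_mult: "N \<le> a \<Longrightarrow> trunc_eq N (fps_X ^ a * h) 0"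
  by (simp add: trunc_eq_def fps_X_power_mult_nth)

lemma trunc_eq_one_minus_Xpow: "N \<le> a \<Longrightarrow> trunc_eq N (1 - fps_X ^ a) 1"
  by (simp add: trunc_eq_def)

lemma trunc_eq_inverse:
  fixes f g :: "'a::field fps"
  assumes "trunc_eq N f g" "f $ 0 \<noteq> 0"
  shows "trunc_eq N (inverse f) (inverse g)"
proof (cases "N = 0")
  case False
  then have "fps_cutoff N (inverse (fps_cutoff N f)) = fps_cutoff N (inverse (fps_cutoff N g))"
    using assms by (simp add: trunc_eq_def fps_cutoff_eq_fps_cutoff_iff [symmetric])
  moreover have "g $ 0 \<noteq> 0"
    using assms False by (simp add: trunc_eq_def)
  ultimately show ?thesis
    using assms
    by (simp add: fps_cutoff_inverse trunc_eq_def fps_cutoff_eq_fps_cutoff_iff [symmetric])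
qed (simp add: trunc_eq_def)

lemma trunc_eq_inverse_solve:
  fixes a x y :: "'a::field fps"
  assumes "trunc_eq N (a * x) y" "a $ 0 \<noteq> 0" "x $ 0 \<noteq> 0"
  shows "trunc_eq N (inverse a) (x * inverse y)"
proof -
  have "inverse a = x * inverse (a * x)"
    using assms(3) by (simp add: fps_inverse_mult inverse_mult_eq_1' algebra_simps)
  also have "trunc_eq N \<dots> (x * inverse y)"
    using assms by (intro trunc_eq_mult trunc_eq_refl trunc_eq_inverse) simp_all
  finally show ?thesis .
qed

lemma fps_prod_nth_0: "prod f S $ 0 = (\<Prod>x\<in>S. f x $ 0 :: 'a::comm_ring_1)"
  by (induction S rule: infinite_finite_induct) simp_all

definition fps_dilate :: "nat \<Rightarrow> 'a::comm_ring_1 fps \<Rightarrow> 'a fps" where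
  "fps_dilate r f = f oo fps_X ^ r"

lemma fps_dilate_nth:
  fixes f :: "'a::idom fps"
  assumes "r > 0"
  shows "fps_dilate r f $ i = (if r dvd i then f $ (i div r) else 0)"
proof -
  have "fps_dilate r f $ i = (\<Sum>j = 0..i. if i = r * j then f $ j else 0)"
    unfolding fps_dilate_def fps_compose_nth
    by (simp add: power_mult [symmetric] if_distrib cong: if_cong)
  also have "\<dots> = (if r dvd i then f $ (i div r) else 0)"
  proof (cases "r dvd i")
    case True
    then obtain m where "i = r * m"
      by blast
    then show ?thesis
      using assms by (simp add: sum.delta_remove [of "{0..r * m}" m] mult_left_cancel)
  qed (auto intro!: sum.neutral)
  finally show ?thesis .
qed

lemma trunc_eq_dilate:
  fixes f g :: "'a::idom fps"
  assumes "r > 0" "trunc_eq N f g"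
  shows "trunc_eq (r * N) (fps_dilate r f) (fps_dilate r g)"
  using assms by (auto simp: trunc_eq_def fps_dilate_nth)

lemma fps_dilate_mult:
  "r > 0 \<Longrightarrow> fps_dilate r (f * g) = fps_dilate r f * fps_dilate r (g::'a::idom fps)"
  unfolding fps_dilate_def by (rule fps_compose_mult_distrib) simp

lemma fps_dilate_power:
  "r > 0 \<Longrightarrow> fps_dilate r (f ^ k) = fps_dilate r (f::'a::idom fps) ^ k"
  unfolding fps_dilate_def by (rule fps_compose_power [symmetric]) simp

lemma fps_dilate_prod:
  "r > 0 \<Longrightarrow> fps_dilate r (prod f S) = (\<Prod>x\<in>S. fps_dilate r (f x :: 'a::idom fps))"
  unfolding fps_dilate_def by (rule fps_compose_prod_distrib) simp

lemma fps_dilate_inverse: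
  "r > 0 \<Longrightarrow> f $ 0 \<noteq> 0 \<Longrightarrow> fps_dilate r (inverse f) = inverse (fps_dilate r (f::'a::field fps))"
  unfolding fps_dilate_def by (rule fps_inverse_compose) simp_all

lemma fps_dilate_dilate:
  assumes "r > 0" "s > 0"
  shows "fps_dilate r (fps_dilate s f) = fps_dilate (s * r) (f::'a::idom fps)"
proof -
  have "fps_dilate r (fps_dilate s f) = f oo (fps_X ^ s oo fps_X ^ r)"
    unfolding fps_dilate_def using assms by (simp add: fps_compose_assoc)
  also have "fps_X ^ s oo fps_X ^ r = ((fps_X::'a fps) ^ r) ^ s"
    using assms by (simp add: fps_X_power_compose)
  finally show ?thesis
    by (simp add: fps_dilate_def power_mult [symmetric] mult.commute)
qed

lemma fps_dilate_one_minus_Xpow: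
  "r > 0 \<Longrightarrow> fps_dilate r (1 - fps_X ^ a) = (1 - fps_X ^ (r * a) :: 'a::idom fps)"
  by (simp add: fps_dilate_def fps_compose_sub_distrib fps_X_power_compose power_mult)

section \<open>Counting multisets by weight\<close>

definition weighted_msets :: "'t set \<Rightarrow> ('t \<Rightarrow> nat) \<Rightarrow> nat \<Rightarrow> 't multiset set" where
  "weighted_msets T w n = {M. set_mset M \<subseteq> T \<and> sum_mset (image_mset w M) = n}"

definition fps_geometric :: "nat \<Rightarrow> 'a::comm_ring_1 fps" where
  "fps_geometric d = Abs_fps (\<lambda>i. of_bool (d dvd i))"

lemma weighted_msets_empty: "weighted_msets {} w n = (if n = 0 then {{#}} else {})"
  by (auto simp: weighted_msets_def)

lemma weighted_msets_insert:
  assumes "t \<notin> T" "w t > 0"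
  shows "weighted_msets (insert t T) w n =
    (\<Union>m \<le> n div w t. (\<lambda>M. M + replicate_mset m t) ` weighted_msets T w (n - m * w t))"
proof (intro equalityI subsetI)
  fix M assume M: "M \<in> weighted_msets (insert t T) w n"
  define m where "m = count M t"
  define M' where "M' = filter_mset (\<lambda>x. x \<noteq> t) M"
  have M_eq: "M = M' + replicate_mset m t"
    unfolding M'_def m_def by (metis filter_eq_replicate_mset multiset_partition union_commute)
  then have weight: "sum_mset (image_mset w M') + m * w t = n"
    using M by (simp add: weighted_msets_def)
  then have "m \<le> n div w t"
    using assms(2) by (metis le_add2 less_eq_div_iff_mult_less_eq)
  moreover have "set_mset M' \<subseteq> T"
    using M unfolding M'_def weighted_msets_def by auto
  ultimately show "M \<in> (\<Union>m \<le> n div w t.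
      (\<lambda>M. M + replicate_mset m t) ` weighted_msets T w (n - m * w t))"
    using M_eq weight by (force simp: weighted_msets_def)
next
  fix M
  assume "M \<in> (\<Union>m \<le> n div w t. (\<lambda>M. M + replicate_mset m t) ` weighted_msets T w (n - m * w t))"
  then obtain m M' where "m * w t \<le> n" "M' \<in> weighted_msets T w (n - m * w t)"
    and "M = M' + replicate_mset m t"
    using assms(2) by (auto simp: less_eq_div_iff_mult_less_eq)
  then show "M \<in> weighted_msets (insert t T) w n"
    by (auto simp: weighted_msets_def)
qed

lemma finite_weighted_msets:
  "finite T \<Longrightarrow> \<forall>t\<in>T. w t > 0 \<Longrightarrow> finite (weighted_msets T w n)"
proof (induction T arbitrary: n rule: finite_induct)
  case (insert t T)
  then have "finite (weighted_msets T w k)" for k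
    by simp
  then show ?case
    using insert.hyps insert.prems by (simp add: weighted_msets_insert)
qed (simp add: weighted_msets_empty)

lemma card_weighted_msets_insert:
  assumes "finite T" "\<forall>t\<in>T. w t > 0" "t \<notin> T" "w t > 0"
  shows "card (weighted_msets (insert t T) w n) =
    (\<Sum>m \<le> n div w t. card (weighted_msets T w (n - m * w t)))"
proof -
  let ?A = "\<lambda>m. (\<lambda>M. M + replicate_mset m t) ` weighted_msets T w (n - m * w t)"
  have card_A: "card (?A m) = card (weighted_msets T w (n - m * w t))" for m
    by (rule card_image) (auto simp: inj_on_def)
  have "count M t = 0" if "M \<in> weighted_msets T w k" for M k
    using that assms(3) by (auto simp: weighted_msets_def count_eq_zero_iff)
  then have count: "count M t = m" if "M \<in> ?A m" for M m
    using that by auto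
  have disjoint: "?A i \<inter> ?A j = {}" if "i \<noteq> j" for i j
    using that count by (metis disjoint_iff)
  have "card (\<Union>m \<le> n div w t. ?A m) = (\<Sum>m \<le> n div w t. card (?A m))"
    using assms by (intro card_UN_disjoint) (auto simp: finite_weighted_msets disjoint)
  then show ?thesis
    using assms by (simp add: weighted_msets_insert card_A)
qed

lemma fps_geometric_mult_nth:
  assumes "d > 0"
  shows "(fps_geometric d * h) $ n = (\<Sum>m \<le> n div d. h $ (n - m * d))"
proof -
  have "(fps_geometric d * h) $ n = (\<Sum>i = 0..n. if d dvd i then h $ (n - i) else 0)"
    unfolding fps_mult_nth by (intro sum.cong) (simp_all add: fps_geometric_def)
  also have "\<dots> = (\<Sum>i \<in> {i \<in> {0..n}. d dvd i}. h $ (n - i))"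
    by (rule sum.inter_filter [symmetric]) simp
  also have "{i \<in> {0..n}. d dvd i} = (\<lambda>m. m * d) ` {..n div d}"
  proof (intro equalityI subsetI)
    fix i assume "i \<in> {i \<in> {0..n}. d dvd i}"
    then obtain m where "i = m * d" "m * d \<le> n"
      by (metis dvdE mem_Collect_eq atLeastAtMost_iff mult.commute)
    then show "i \<in> (\<lambda>m. m * d) ` {..n div d}"
      using assms by (auto simp: less_eq_div_iff_mult_less_eq)
  qed (use assms in \<open>auto simp: less_eq_div_iff_mult_less_eq\<close>)
  also have "(\<Sum>i \<in> (\<lambda>m. m * d) ` {..n div d}. h $ (n - i)) = (\<Sum>m \<le> n div d. h $ (n - m * d))"
    using assms by (intro sum.reindex_cong [of "\<lambda>m. m * d"]) (auto simp: inj_on_def)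
  finally show ?thesis .
qed

lemma of_nat_card_weighted_msets:
  "finite T \<Longrightarrow> \<forall>t\<in>T. w t > 0 \<Longrightarrow>
    of_nat (card (weighted_msets T w n)) = (\<Prod>t\<in>T. fps_geometric (w t) :: 'a::comm_ring_1 fps) $ n"
proof (induction T arbitrary: n rule: finite_induct)
  case (insert t T)
  then show ?case
    by (simp add: card_weighted_msets_insert fps_geometric_mult_nth)
qed (simp add: weighted_msets_empty)

lemma fps_geometric_eq_inverse:
  assumes "d > 0"
  shows "fps_geometric d = inverse (1 - fps_X ^ d :: 'a::field fps)"
proof -
  have "(1 - fps_X ^ d) * fps_geometric d = (1 :: 'a fps)"
  proof (rule fps_ext)
    fix i
    show "((1 - fps_X ^ d) * fps_geometric d) $ i = (1 :: 'a fps) $ i"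
      using assms by (cases "i < d")
        (auto simp: algebra_simps fps_X_power_mult_nth fps_geometric_def dvd_imp_le
          dvd_minus_self)
  qed
  then show ?thesis
    by (simp add: fps_inverse_unique)
qed

lemma colored_partitions_eq_weighted_msets:
  "colored_partitions k P n = weighted_msets ({a \<in> {1..n}. P a} \<times> {..<k}) fst n"
proof (intro equalityI subsetI)
  fix M assume M: "M \<in> colored_partitions k P n"
  have "fst x \<le> n" if "x \<in># M" for x
    using that M sum_mset.remove [of "fst x" "image_mset fst M"]
    by (auto simp: colored_partitions_def)
  then show "M \<in> weighted_msets ({a \<in> {1..n}. P a} \<times> {..<k}) fst n"
    using M by (fastforce simp: colored_partitions_def weighted_msets_def)
qed (fastforce simp: colored_partitions_def weighted_msets_def)

lemma of_nat_card_colored_partitions: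
  "of_nat (card (colored_partitions k P n)) =
    (\<Prod>a \<in> {a \<in> {1..n}. P a}. fps_geometric a ^ k :: 'a::comm_ring_1 fps) $ n"
proof -
  have "of_nat (card (colored_partitions k P n)) =
      (\<Prod>(a, c) \<in> {a \<in> {1..n}. P a} \<times> {..<k}. fps_geometric a :: 'a fps) $ n"
    unfolding colored_partitions_eq_weighted_msets
    by (subst of_nat_card_weighted_msets) (auto simp: case_prod_beta)
  then show ?thesis
    by (simp add: prod.cartesian_product [symmetric])
qed

lemma of_nat_card_colored_partitions_inverse:
  assumes "n \<le> L"
  shows "(of_nat (card (colored_partitions k P n)) :: 'a::field) =
    (inverse (\<Prod>a \<in> {a \<in> {1..L}. P a}. 1 - fps_X ^ a) ^ k) $ n"
proof -
  let ?G = "\<lambda>A. \<Prod>a \<in> A. fps_geometric a ^ k :: 'a fps"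
  have "{a \<in> {1..L}. P a} = {a \<in> {1..n}. P a} \<union> {a \<in> {Suc n..L}. P a}"
    using assms by auto
  then have split: "?G {a \<in> {1..L}. P a} = ?G {a \<in> {1..n}. P a} * ?G {a \<in> {Suc n..L}. P a}"
    by (simp only:) (rule prod.union_disjoint; auto)
  have "trunc_eq (Suc n) (?G {a \<in> {Suc n..L}. P a}) 1"
  proof -
    have geometric: "trunc_eq (Suc n) (fps_geometric a) 1" if "a > n" for a
      using that by (auto simp: trunc_eq_def fps_geometric_def dest: dvd_imp_le)
    have "trunc_eq (Suc n) (fps_geometric a ^ k) 1" if "a > n" for a
      using trunc_eq_power [OF geometric [OF that], of k] by simp
    then have "trunc_eq (Suc n) (?G {a \<in> {Suc n..L}. P a}) (\<Prod>a \<in> {a \<in> {Suc n..L}. P a}. 1)"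
      by (intro trunc_eq_prod) (auto simp: Suc_le_eq)
    then show ?thesis
      by simp
  qed
  then have "trunc_eq (Suc n) (?G {a \<in> {1..L}. P a}) (?G {a \<in> {1..n}. P a} * 1)"
    unfolding split by (intro trunc_eq_mult trunc_eq_refl)
  then have "?G {a \<in> {1..n}. P a} $ n = ?G {a \<in> {1..L}. P a} $ n"
    by (simp add: trunc_eq_def)
  also have "?G {a \<in> {1..L}. P a} = inverse (\<Prod>a \<in> {a \<in> {1..L}. P a}. 1 - fps_X ^ a) ^ k"
    by (simp add: fps_geometric_eq_inverse prod_power_distrib inverse_prod_fps)
  finally show ?thesis
    by (simp add: of_nat_card_colored_partitions)
qed

section \<open>Gaussian binomial coefficients\<close>

fun qbinomial :: "'a::comm_ring_1 \<Rightarrow> nat \<Rightarrow> nat \<Rightarrow> 'a" where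
  "qbinomial q 0 j = (if j = 0 then 1 else 0)"
| "qbinomial q (Suc N) j =
    (if j = 0 then 1 else qbinomial q N j + q ^ (Suc N - j) * qbinomial q N (j - 1))"

lemma qbinomial_eq_0: "N < j \<Longrightarrow> qbinomial q N j = 0"
  by (induction N arbitrary: j) auto

lemma qbinomial_0_right [simp]: "qbinomial q N 0 = 1"
  by (cases N) auto

lemma qbinomial_diag [simp]: "qbinomial q N N = 1"
  by (induction N) (auto simp: qbinomial_eq_0)

lemma Suc_choose_two: "Suc j choose 2 = (j choose 2) + j"
  by (simp add: numeral_2_eq_2)

lemma two_times_choose_two: "2 * int (j choose 2) = int j * int j - int j"
  by (induction j) (auto simp: Suc_choose_two algebra_simps)

lemma q_binomial_theorem:
  fixes q w z :: "'a::comm_ring_1"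
  shows "(\<Prod>i<N. w + z * q ^ i) = (\<Sum>j\<le>N. qbinomial q N j * q ^ (j choose 2) * z ^ j * w ^ (N - j))"
proof (induction N)
  case (Suc N)
  let ?t = "\<lambda>j. qbinomial q N j * q ^ (j choose 2) * z ^ j * w ^ (N - j)"
  have "(\<Prod>i<Suc N. w + z * q ^ i) = (\<Sum>j\<le>N. ?t j * w) + (\<Sum>j\<le>N. ?t j * (z * q ^ N))"
    using Suc by (simp add: distrib_left sum_distrib_right)
  also have "(\<Sum>j\<le>N. ?t j * w) =
      (\<Sum>j\<le>Suc N. qbinomial q N j * q ^ (j choose 2) * z ^ j * w ^ (Suc N - j))"
    by (simp add: qbinomial_eq_0 Suc_diff_le algebra_simps)
  also have "(\<Sum>j\<le>N. ?t j * (z * q ^ N)) =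
      (\<Sum>j\<le>Suc N. if j = 0 then 0 else
        q ^ (Suc N - j) * qbinomial q N (j - 1) * q ^ (j choose 2) * z ^ j * w ^ (Suc N - j))"
  proof -
    have "q ^ (N - j) * q ^ (Suc j choose 2) = q ^ (j choose 2) * q ^ N" if "j \<le> N" for j
      using that by (simp add: Suc_choose_two power_add [symmetric] add.commute)
    then show ?thesis
      by (subst sum.atMost_Suc_shift) (auto intro!: sum.cong simp: numeral_2_eq_2 algebra_simps)
  qed
  also have "(\<Sum>j\<le>Suc N. qbinomial q N j * q ^ (j choose 2) * z ^ j * w ^ (Suc N - j)) +
      (\<Sum>j\<le>Suc N. if j = 0 then 0 else
        q ^ (Suc N - j) * qbinomial q N (j - 1) * q ^ (j choose 2) * z ^ j * w ^ (Suc N - j)) =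
      (\<Sum>j\<le>Suc N. qbinomial q (Suc N) j * q ^ (j choose 2) * z ^ j * w ^ (Suc N - j))"
    by (subst sum.distrib [symmetric], intro sum.cong refl) (simp add: numeral_2_eq_2 algebra_simps)
  finally show ?case .
qed (simp add: numeral_2_eq_2)

definition q_pochhammer :: "'a::comm_ring_1 \<Rightarrow> nat \<Rightarrow> 'a" where
  "q_pochhammer q m = (\<Prod>i = 1..m. 1 - q ^ i)"

lemma q_pochhammer_0 [simp]: "q_pochhammer q 0 = 1"
  by (simp add: q_pochhammer_def)

lemma q_pochhammer_Suc: "q_pochhammer q (Suc m) = q_pochhammer q m * (1 - q ^ Suc m)"
  by (simp add: q_pochhammer_def mult.commute)

lemma q_pochhammer_mult_qbinomial:
  "j \<le> N \<Longrightarrow> q_pochhammer q j * q_pochhammer q (N - j) * qbinomial q N j = q_pochhammer q N"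
proof (induction N arbitrary: j)
  case (Suc N)
  consider "j = 0" | "j = Suc N" | i where "j = Suc i" "i < N"
    using Suc.prems by (cases j) (auto simp: le_less)
  then show ?case
  proof cases
    case 3
    define k where "k = N - Suc i"
    have N_eq: "N = Suc (i + k)" and Suc_N_eq: "Suc N - Suc i = Suc k" and "N - i = Suc k"
      using 3 by (auto simp: k_def)
    have IH1: "q_pochhammer q (Suc i) * q_pochhammer q k * qbinomial q N (Suc i) = q_pochhammer q N"
      using Suc.IH [of "Suc i"] 3 by (simp add: k_def)
    have IH2: "q_pochhammer q i * q_pochhammer q (Suc k) * qbinomial q N i = q_pochhammer q N"
      using Suc.IH [of i] 3 by (simp add: N_eq)
    have "q_pochhammer q (Suc i) * q_pochhammer q (Suc k) * qbinomial q (Suc N) (Suc i) =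
        (1 - q ^ Suc k) * (q_pochhammer q (Suc i) * q_pochhammer q k * qbinomial q N (Suc i)) +
        q ^ Suc k * (1 - q ^ Suc i) * (q_pochhammer q i * q_pochhammer q (Suc k) * qbinomial q N i)"
      by (simp add: Suc_N_eq \<open>N - i = Suc k\<close> q_pochhammer_Suc algebra_simps)
    also have "\<dots> = q_pochhammer q N * (1 - q ^ (Suc k + Suc i))"
      unfolding IH1 IH2 by (simp add: power_add algebra_simps)
    also have "Suc k + Suc i = Suc N"
      using N_eq by simp
    finally show ?thesis
      using 3 \<open>N - i = Suc k\<close> by (simp add: Suc_N_eq q_pochhammer_Suc mult_ac)
  qed (simp_all add: qbinomial_eq_0)
qed simp

section \<open>A finite form of the Jacobi triple product\<close>

text \<open>\<open>triangle_offset n j = k (k + 1) / 2\<close> for the integer \<open>k = j - n\<close>.\<close>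

definition triangle_offset :: "nat \<Rightarrow> nat \<Rightarrow> nat" where
  "triangle_offset n j = (if n \<le> j then Suc (j - n) choose 2 else (n - j) choose 2)"

lemma two_times_triangle_offset:
  "2 * int (triangle_offset n j) = (int j - int n) * (int j - int n + 1)"
proof (cases "n \<le> j")
  case True
  then show ?thesis
    using two_times_choose_two [of "Suc (j - n)"] by (simp add: triangle_offset_def algebra_simps)
next
  case False
  then show ?thesis
    using two_times_choose_two [of "n - j"] by (simp add: triangle_offset_def algebra_simps)
qed

lemma prod_lessThan_add: "(\<Prod>i < a + (b::nat). f i) = (\<Prod>i < a. f i) * (\<Prod>i < b. f (a + i))"
  by (induction b) (auto simp: mult.assoc)

lemma sum_lessThan_diff: "(\<Sum>m<n. n - m) = Suc n choose 2"
proof -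
  have "(\<Sum>m<n. n - m) = (\<Sum>m<n. Suc m)"
    using sum.nat_diff_reindex [of "\<lambda>m. n - m" n] by simp
  also have "\<dots> = Suc n choose 2"
    by (induction n) (simp_all add: Suc_choose_two)
  finally show ?thesis .
qed

lemma finite_jacobi_triple_product_shifted:
  fixes q w z :: "'a::comm_ring_1"
  shows "(\<Prod>i<2*n. w * q ^ n + (z * q) * q ^ i) =
    q ^ (n * n + (Suc n choose 2)) * (\<Prod>m<n. (w + z * q ^ Suc m) * (z + w * q ^ m))"
proof -
  let ?f = "\<lambda>i. w * q ^ n + (z * q) * q ^ i"
  have "(\<Prod>i<2*n. ?f i) = (\<Prod>m<n. ?f (n - Suc m)) * (\<Prod>m<n. ?f (n + m))"
    using prod.nat_diff_reindex [of ?f n] by (simp add: mult_2 prod_lessThan_add)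
  also have "(\<Prod>m<n. ?f (n - Suc m)) = (\<Prod>m<n. q ^ (n - m) * (z + w * q ^ m))"
  proof (rule prod.cong [OF refl])
    fix m assume "m \<in> {..<n}"
    then obtain k where "n = Suc (k + m)"
      by (metis lessThan_iff less_iff_Suc_add add.commute)
    then show "?f (n - Suc m) = q ^ (n - m) * (z + w * q ^ m)"
      by (simp add: power_add algebra_simps)
  qed
  also have "\<dots> = q ^ (\<Sum>m<n. n - m) * (\<Prod>m<n. z + w * q ^ m)"
    by (simp add: prod.distrib power_sum)
  also have "(\<Sum>m<n. n - m) = Suc n choose 2"
    by (rule sum_lessThan_diff)
  also have "(\<Prod>m<n. ?f (n + m)) = (\<Prod>m<n. q ^ n * (w + z * q ^ Suc m))"
    by (intro prod.cong) (simp_all add: power_add algebra_simps)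
  also have "\<dots> = q ^ (n * n) * (\<Prod>m<n. w + z * q ^ Suc m)"
    by (simp add: prod.distrib power_mult [symmetric] mult.commute)
  finally show ?thesis
    by (simp add: prod.distrib power_add mult_ac)
qed

lemma triangle_offset_identity:
  assumes "j \<le> 2 * n"
  shows "(j choose 2) + j + n * (2 * n - j) = n * n + (Suc n choose 2) + triangle_offset n j"
proof -
  have "2 * int ((j choose 2) + j + n * (2 * n - j)) =
      2 * int (n * n + (Suc n choose 2) + triangle_offset n j)"
    using two_times_choose_two [of j] two_times_choose_two [of "Suc n"]
      two_times_triangle_offset [of n j] assms
    unfolding of_nat_add of_nat_mult by simp (simp add: algebra_simps)
  then show ?thesis
    by (simp only: mult_cancel_left of_nat_eq_iff) simp
qed

theorem finite_jacobi_triple_product: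
  fixes q w z :: "'a::idom"
  assumes "q \<noteq> 0"
  shows "(\<Prod>m<n. (w + z * q ^ Suc m) * (z + w * q ^ m)) =
    (\<Sum>j\<le>2*n. qbinomial q (2*n) j * z ^ j * w ^ (2*n - j) * q ^ triangle_offset n j)"
proof -
  let ?M = "n * n + (Suc n choose 2)"
  have "q ^ ?M * (\<Prod>m<n. (w + z * q ^ Suc m) * (z + w * q ^ m)) =
      (\<Prod>i<2*n. w * q ^ n + (z * q) * q ^ i)"
    by (rule finite_jacobi_triple_product_shifted [symmetric])
  also have "\<dots> =
      (\<Sum>j\<le>2*n. qbinomial q (2*n) j * q ^ (j choose 2) * (z * q) ^ j * (w * q ^ n) ^ (2*n - j))"
    by (rule q_binomial_theorem)
  also have "\<dots> = q ^ ?M *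
      (\<Sum>j\<le>2*n. qbinomial q (2*n) j * z ^ j * w ^ (2*n - j) * q ^ triangle_offset n j)"
    unfolding sum_distrib_left
  proof (rule sum.cong [OF refl])
    fix j assume "j \<in> {..2*n}"
    then have "q ^ (j choose 2) * q ^ j * q ^ (n * (2 * n - j)) = q ^ ?M * q ^ triangle_offset n j"
      by (simp add: triangle_offset_identity power_add [symmetric])
    then show "qbinomial q (2*n) j * q ^ (j choose 2) * (z * q) ^ j * (w * q ^ n) ^ (2*n - j) =
        q ^ ?M * (qbinomial q (2*n) j * z ^ j * w ^ (2*n - j) * q ^ triangle_offset n j)"
      by (simp add: power_mult [symmetric] algebra_simps)
  qed
  finally show ?thesis
    using assms by simp
qed

section \<open>Passing to the limit in the finite triple product\<close>

lemma trunc_eq_q_pochhammer_Xpow: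
  assumes "r \<ge> 1" "m \<le> m'"
  shows "trunc_eq (Suc m) (q_pochhammer (fps_X ^ r :: 'a::comm_ring_1 fps) m)
    (q_pochhammer (fps_X ^ r) m')"
  using assms(2)
proof (induction m' rule: dec_induct)
  case (step m')
  have "Suc m' \<le> r * Suc m'"
    using mult_le_mono1 [OF assms(1), of "Suc m'"] by simp
  then have "Suc m \<le> r * Suc m'"
    using step(1) by linarith
  then have "trunc_eq (Suc m) (1 - (fps_X ^ r) ^ Suc m') (1 :: 'a fps)"
    unfolding power_mult [symmetric] by (rule trunc_eq_one_minus_Xpow)
  then have "trunc_eq (Suc m) (q_pochhammer (fps_X ^ r) m' * (1 - (fps_X ^ r) ^ Suc m'))
      (q_pochhammer (fps_X ^ r :: 'a fps) m' * 1)"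
    by (intro trunc_eq_mult trunc_eq_refl)
  then have "trunc_eq (Suc m) (q_pochhammer (fps_X ^ r) (Suc m'))
      (q_pochhammer (fps_X ^ r :: 'a fps) m')"
    by (simp add: q_pochhammer_Suc)
  then show ?case
    by (rule trunc_eq_trans [OF step(3) trunc_eq_sym])
qed simp

lemma q_pochhammer_Xpow_nth_0:
  "r \<ge> 1 \<Longrightarrow> q_pochhammer (fps_X ^ r :: 'a::comm_ring_1 fps) m $ 0 = 1"
  using trunc_eq_q_pochhammer_Xpow [of r 0 m] by (simp add: trunc_eq_def)

lemma fps_dilate_q_pochhammer:
  "r > 0 \<Longrightarrow> fps_dilate r (q_pochhammer fps_X m) = q_pochhammer (fps_X ^ r :: 'a::idom fps) m"
  by (simp add: q_pochhammer_def fps_dilate_prod fps_dilate_one_minus_Xpow power_mult)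

lemma q_pochhammer_X_nth_0 [simp]: "q_pochhammer (fps_X :: 'a::comm_ring_1 fps) m $ 0 = 1"
  using q_pochhammer_Xpow_nth_0 [of 1] by simp

lemma trunc_eq_q_pochhammer_X:
  "m \<le> m' \<Longrightarrow>
    trunc_eq (Suc m) (q_pochhammer (fps_X :: 'a::comm_ring_1 fps) m) (q_pochhammer fps_X m')"
  using trunc_eq_q_pochhammer_Xpow [of 1] by simp

text \<open>The four q-Pochhammer symbols in \<open>(q;q)\<^sub>n (q;q)\<^sub>2\<^sub>n / ((q;q)\<^sub>j (q;q)\<^sub>2\<^sub>n\<^sub>-\<^sub>j)\<close>
  agree up to order \<open>min j (2n - j)\<close>.\<close>

lemma trunc_eq_q_pochhammer_mult_qbinomial:
  fixes r :: nat
  assumes r: "r \<ge> 1" and j: "j \<le> 2 * n"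
  shows "trunc_eq (Suc (min j (2 * n - j)))
    (q_pochhammer (fps_X ^ r :: 'a::field fps) n * qbinomial (fps_X ^ r) (2 * n) j) 1"
proof -
  let ?Q = "q_pochhammer (fps_X ^ r :: 'a fps)"
  define m where "m = min j (2 * n - j)"
  have Q0: "?Q k $ 0 = 1" for k
    by (rule q_pochhammer_Xpow_nth_0 [OF r])
  have "?Q (2 * n) * inverse (?Q j) * inverse (?Q (2 * n - j)) =
      (?Q j * inverse (?Q j)) * (?Q (2 * n - j) * inverse (?Q (2 * n - j))) *
      qbinomial (fps_X ^ r) (2 * n) j"
    by (subst q_pochhammer_mult_qbinomial [OF j, symmetric]) (simp only: mult_ac)
  then have "qbinomial (fps_X ^ r) (2 * n) j =
      ?Q (2 * n) * inverse (?Q j) * inverse (?Q (2 * n - j))"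
    using Q0 by (simp add: inverse_mult_eq_1')
  moreover have "trunc_eq (Suc m) (?Q k) (?Q m)" if "m \<le> k" for k
    using trunc_eq_q_pochhammer_Xpow [OF r that] by (rule trunc_eq_sym)
  then have "trunc_eq (Suc m) (?Q n * (?Q (2 * n) * inverse (?Q j) * inverse (?Q (2 * n - j))))
      (?Q m * (?Q m * inverse (?Q m) * inverse (?Q m)))"
    by (intro trunc_eq_mult trunc_eq_inverse) (auto simp: m_def Q0)
  moreover have "?Q m * (?Q m * inverse (?Q m) * inverse (?Q m)) = 1"
    using Q0 [of m] by (simp add: inverse_mult_eq_1' mult.assoc)
  ultimately show ?thesis
    by (simp add: m_def)
qed

text \<open>For \<open>k = j - n\<close> this is \<open>r k (k + 1) / 2 - k\<close> (\<open>two_times_jtp_exponent\<close>).\<close>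

definition jtp_exponent :: "nat \<Rightarrow> nat \<Rightarrow> nat \<Rightarrow> nat" where
  "jtp_exponent r n j = 2 * n - j + r * triangle_offset n j - n"

lemma jtp_exponent_le:
  assumes "r \<ge> 1" "j \<le> 2 * n"
  shows "n \<le> 2 * n - j + r * triangle_offset n j"
proof (cases "n \<le> j")
  case True
  then have "j - n \<le> triangle_offset n j"
    by (simp add: triangle_offset_def Suc_choose_two)
  moreover have "triangle_offset n j \<le> r * triangle_offset n j"
    using assms by simp
  ultimately show ?thesis
    using assms by linarith
qed simp

lemma two_times_jtp_exponent:
  assumes "r \<ge> 1" "j \<le> 2 * n"
  shows "2 * int (jtp_exponent r n j) =
    int r * (int j - int n) * (int j - int n + 1) - 2 * (int j - int n)"
proof -
  have "int (jtp_exponent r n j) = 2 * int n - int j + int r * int (triangle_offset n j) - int n"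
    using jtp_exponent_le [OF assms] assms by (simp add: jtp_exponent_def)
  then have "2 * int (jtp_exponent r n j) =
      2 * (int n - int j) + int r * (2 * int (triangle_offset n j))"
    by (simp add: algebra_simps)
  then show ?thesis
    using two_times_triangle_offset [of n j] by (simp add: algebra_simps)
qed

lemma jtp_exponent_ge:
  assumes "r \<ge> 1" "2 * K \<le> n" "j \<le> 2 * n" "Suc (min j (2 * n - j)) < K"
  shows "K \<le> jtp_exponent r n j"
proof (cases "j \<le> n")
  case False
  have "j - n - 1 \<le> (j - n) choose 2"
    by (cases "j - n") (simp_all add: Suc_choose_two)
  then have "2 * (j - n) - 1 \<le> triangle_offset n j"
    using False by (simp add: triangle_offset_def Suc_choose_two)
  moreover have "triangle_offset n j \<le> r * triangle_offset n j"
    using assms by simp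
  ultimately show ?thesis
    using False assms unfolding jtp_exponent_def by linarith
qed (use assms in \<open>simp add: jtp_exponent_def\<close>)

lemma finite_jacobi_triple_product_Xpow:
  assumes "r \<ge> 1"
  shows "(\<Prod>m<n. (1 + fps_X ^ (r * m + r - 1)) * (1 + fps_X ^ (r * m + 1))) =
    (\<Sum>j\<le>2 * n. qbinomial (fps_X ^ r) (2 * n) j * fps_X ^ jtp_exponent r n j :: 'a::idom fps)"
proof -
  have "Suc (r * m + r - 1) = r * Suc m" for m
    using assms by simp
  then have X_eq:
    "fps_X * (1 + fps_X ^ (r * m + r - 1)) = (fps_X + 1 * (fps_X ^ r) ^ Suc m :: 'a fps)" for m
    unfolding power_mult [symmetric] by (metis distrib_left mult_1 mult_1_right power_Suc)
  have Y_eq: "1 + fps_X ^ (r * m + 1) = (1 + fps_X * (fps_X ^ r) ^ m :: 'a fps)" for m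
    by (simp add: power_mult [symmetric])
  have "fps_X ^ n * (\<Prod>m<n. (1 + fps_X ^ (r * m + r - 1)) * (1 + fps_X ^ (r * m + 1))) =
      (\<Prod>m<n. (fps_X * (1 + fps_X ^ (r * m + r - 1))) * (1 + fps_X ^ (r * m + 1)) :: 'a fps)"
    by (simp add: prod.distrib mult.assoc)
  also have "\<dots> = (\<Prod>m<n. (fps_X + 1 * (fps_X ^ r) ^ Suc m) * (1 + fps_X * (fps_X ^ r) ^ m))"
    unfolding X_eq Y_eq ..
  also have "\<dots> = (\<Sum>j\<le>2 * n. qbinomial (fps_X ^ r) (2 * n) j * 1 ^ j * fps_X ^ (2 * n - j) *
      (fps_X ^ r) ^ triangle_offset n j)"
    by (rule finite_jacobi_triple_product) simp
  also have "\<dots> =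
      fps_X ^ n * (\<Sum>j\<le>2 * n. qbinomial (fps_X ^ r) (2 * n) j * fps_X ^ jtp_exponent r n j)"
    unfolding sum_distrib_left
  proof (rule sum.cong [OF refl])
    fix j assume "j \<in> {..2 * n}"
    then have "2 * n - j + r * triangle_offset n j = n + jtp_exponent r n j"
      using jtp_exponent_le [OF assms, of j n] by (simp add: jtp_exponent_def)
    then show "qbinomial (fps_X ^ r) (2 * n) j * 1 ^ j * fps_X ^ (2 * n - j) *
        (fps_X ^ r) ^ triangle_offset n j =
        fps_X ^ n * (qbinomial (fps_X ^ r) (2 * n) j * (fps_X ^ jtp_exponent r n j :: 'a fps))"
      by (simp add: power_mult [symmetric] power_add [symmetric] algebra_simps)
  qed
  finally show ?thesis
    by simp
qed

lemma trunc_eq_sum_Xpow_jtp_exponent: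
  assumes r: "r \<ge> 1" and n: "2 * K \<le> n"
  shows "trunc_eq K
    (q_pochhammer (fps_X ^ r) n * (\<Prod>m<n. (1 + fps_X ^ (r * m + r - 1)) * (1 + fps_X ^ (r * m + 1))))
    (\<Sum>j\<le>2 * n. fps_X ^ jtp_exponent r n j :: 'a::field fps)"
proof -
  let ?c = "\<lambda>j. q_pochhammer (fps_X ^ r :: 'a fps) n * qbinomial (fps_X ^ r) (2 * n) j"
  have "trunc_eq K (?c j * fps_X ^ jtp_exponent r n j) (1 * fps_X ^ jtp_exponent r n j)"
    if j: "j \<le> 2 * n" for j
  proof (cases "K \<le> Suc (min j (2 * n - j))")
    case True
    then show ?thesis
      using trunc_eq_q_pochhammer_mult_qbinomial [OF r j]
      by (intro trunc_eq_mult trunc_eq_refl) (rule trunc_eq_mono)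
  next
    case False
    then have "K \<le> jtp_exponent r n j"
      using jtp_exponent_ge [OF r n j] by simp
    then have "trunc_eq K (?c j * fps_X ^ jtp_exponent r n j) 0"
      and "trunc_eq K (1 * fps_X ^ jtp_exponent r n j) 0"
      by (simp_all only: mult.commute [of _ "fps_X ^ _"] trunc_eq_Xpow_mult)
    then show ?thesis
      by (rule trunc_eq_trans [OF _ trunc_eq_sym])
  qed
  then have "trunc_eq K (\<Sum>j\<le>2 * n. ?c j * fps_X ^ jtp_exponent r n j)
      (\<Sum>j\<le>2 * n. 1 * fps_X ^ jtp_exponent r n j)"
    by (intro trunc_eq_sum) simp
  then show ?thesis
    unfolding finite_jacobi_triple_product_Xpow [OF r] sum_distrib_left
    by (simp only: mult.assoc mult_1_left)
qed

text \<open>The series \<open>\<Sum>\<^sub>k q^(r k (k + 1) / 2 - k)\<close> over all integers \<open>k\<close>.\<close>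

definition jtp_series :: "nat \<Rightarrow> 'a::comm_ring_1 fps" where
  "jtp_series r = Abs_fps (\<lambda>i. of_nat (card {k::int. 2 * int i = int r * k * (k + 1) - 2 * k}))"

lemma sum_Xpow_nth:
  "finite A \<Longrightarrow> (\<Sum>j\<in>A. fps_X ^ f j :: 'a::comm_ring_1 fps) $ i = of_nat (card {j \<in> A. f j = i})"
  by (simp add: fps_sum_nth sum.inter_filter [symmetric] of_bool_def eq_commute)

lemma abs_le_jtp_value:
  fixes k :: int
  assumes "r \<ge> 2"
  shows "2 * \<bar>k\<bar> \<le> int r * k * (k + 1) - 2 * k"
proof (cases "k \<ge> 0")
  case True
  have "2 * (k * (k + 1)) \<le> int r * (k * (k + 1))"
    using assms True by (intro mult_right_mono) auto
  moreover have "k \<le> k * k"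
    using True by (cases "k = 0") (auto simp: mult_le_cancel_left1)
  ultimately show ?thesis
    using True by (simp add: algebra_simps)
next
  case False
  then have "0 \<le> int r * (k * (k + 1))"
    by (simp add: zero_le_mult_iff)
  then show ?thesis
    using False by (simp add: algebra_simps)
qed

lemma sum_Xpow_jtp_exponent_nth:
  assumes r: "r \<ge> 2" and i: "i \<le> n"
  shows "(\<Sum>j\<le>2 * n. fps_X ^ jtp_exponent r n j :: 'a::comm_ring_1 fps) $ i = jtp_series r $ i"
proof -
  let ?A = "{j \<in> {..2 * n}. jtp_exponent r n j = i}"
  let ?B = "{k::int. 2 * int i = int r * k * (k + 1) - 2 * k}"
  have bounded: "int (nat (k + int n)) - int n = k" "nat (k + int n) \<le> 2 * n" if "k \<in> ?B" for k
    using that abs_le_jtp_value [OF r, of k] i by auto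
  have "bij_betw (\<lambda>j. int j - int n) ?A ?B"
  proof (rule bij_betw_byWitness [where f' = "\<lambda>k. nat (k + int n)"])
    show "(\<lambda>k. nat (k + int n)) ` ?B \<subseteq> ?A"
      using bounded two_times_jtp_exponent [of r "nat (_ + int n)" n] r
      by (force simp del: of_nat_nat)
  qed (use bounded two_times_jtp_exponent [of r _ n] r in auto)
  then show ?thesis
    by (simp add: sum_Xpow_nth jtp_series_def bij_betw_same_card)
qed

theorem jacobi_triple_product_trunc:
  assumes "r \<ge> 2" "2 * K \<le> n"
  shows "trunc_eq K
    (q_pochhammer (fps_X ^ r) n * (\<Prod>m<n. (1 + fps_X ^ (r * m + r - 1)) * (1 + fps_X ^ (r * m + 1))))
    (jtp_series r :: 'a::field fps)"
proof -
  have "trunc_eq K (\<Sum>j\<le>2 * n. fps_X ^ jtp_exponent r n j :: 'a fps) (jtp_series r)"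
    unfolding trunc_eq_def using assms by (auto intro!: sum_Xpow_jtp_exponent_nth)
  moreover have "r \<ge> 1"
    using assms by simp
  ultimately show ?thesis
    using trunc_eq_trans [OF trunc_eq_sum_Xpow_jtp_exponent] assms(2) by blast
qed

section \<open>Euler's and Jacobi's identities modulo 2\<close>

lemma bit_fps_add_self [simp]: "(f :: bit fps) + f = 0"
proof -
  have "(a :: bit) + a = 0" for a
    by (cases a) simp_all
  then show ?thesis
    by (intro fps_ext) (simp only: fps_add_nth fps_zero_nth)
qed

lemma bit_fps_one_plus: "(1 :: bit fps) + f = 1 - f"
  by (metis add_diff_cancel_left' bit_fps_add_self diff_add_cancel diff_diff_eq2)

lemma bit_fps_one_minus_Xpow_square: "(1 - fps_X ^ a :: bit fps) ^ 2 = 1 - fps_X ^ (2 * a)"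
proof -
  have "(1 - fps_X ^ a :: bit fps) ^ 2 = 1 - (fps_X ^ a + fps_X ^ a) + fps_X ^ (2 * a)"
    by (simp add: power2_eq_square power_add [symmetric] mult_2 algebra_simps)
  then show ?thesis
    by (simp add: bit_fps_one_plus)
qed

lemma bit_q_pochhammer_square:
  "q_pochhammer (fps_X :: bit fps) m ^ 2 = q_pochhammer (fps_X ^ 2) m"
  by (simp add: q_pochhammer_def prod_power_distrib bit_fps_one_minus_Xpow_square power_mult)

lemma bit_q_pochhammer_power_4:
  "q_pochhammer (fps_X :: bit fps) m ^ 4 = q_pochhammer (fps_X ^ 4) m"
proof -
  let ?F = "q_pochhammer (fps_X :: bit fps) m"
  have "?F ^ 4 = (?F ^ 2) ^ 2"
    by (simp add: power_mult [symmetric])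
  also have "\<dots> = fps_dilate 2 ?F ^ 2"
    by (simp add: bit_q_pochhammer_square fps_dilate_q_pochhammer)
  also have "\<dots> = fps_dilate 2 (?F ^ 2)"
    by (simp add: fps_dilate_power)
  also have "\<dots> = fps_dilate 2 (fps_dilate 2 ?F)"
    by (simp add: bit_q_pochhammer_square fps_dilate_q_pochhammer)
  also have "\<dots> = fps_dilate 4 ?F"
    by (subst fps_dilate_dilate) simp_all
  also have "\<dots> = q_pochhammer (fps_X ^ 4) m"
    by (simp add: fps_dilate_q_pochhammer)
  finally show ?thesis .
qed

lemma q_pochhammer_X_3n:
  "q_pochhammer (fps_X ^ 3) n * (\<Prod>m<n. (1 - fps_X ^ (3 * m + 3 - 1)) * (1 - fps_X ^ (3 * m + 1))) =
    q_pochhammer (fps_X :: 'a::comm_ring_1 fps) (3 * n)"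
proof (induction n)
  case (Suc n)
  have e: "3 * n + 3 - 1 = Suc (Suc (3 * n))" "3 * n + 1 = Suc (3 * n)"
    "3 * Suc n = Suc (Suc (Suc (3 * n)))"
    by simp_all
  have new_factors:
    "(1 - fps_X ^ (3 * n + 3 - 1)) * (1 - fps_X ^ (3 * n + 1)) * (1 - (fps_X ^ 3) ^ Suc n) =
      (1 - fps_X ^ Suc (3 * n)) * (1 - fps_X ^ Suc (Suc (3 * n))) *
      (1 - fps_X ^ Suc (Suc (Suc (3 * n))) :: 'a fps)"
    by (simp only: e power_mult [symmetric]) (simp only: mult_ac)
  have "q_pochhammer (fps_X ^ 3) (Suc n) *
      (\<Prod>m<Suc n. (1 - fps_X ^ (3 * m + 3 - 1)) * (1 - fps_X ^ (3 * m + 1))) =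
      (q_pochhammer (fps_X ^ 3) n *
        (\<Prod>m<n. (1 - fps_X ^ (3 * m + 3 - 1)) * (1 - fps_X ^ (3 * m + 1)))) *
      ((1 - fps_X ^ (3 * n + 3 - 1)) * (1 - fps_X ^ (3 * n + 1)) *
        (1 - (fps_X ^ 3) ^ Suc n) :: 'a fps)"
    by (simp only: prod.lessThan_Suc q_pochhammer_Suc mult_ac)
  also have "\<dots> = q_pochhammer fps_X (3 * Suc n)"
    unfolding Suc.IH new_factors by (simp only: e(3) q_pochhammer_Suc mult.assoc)
  finally show ?case .
qed simp

lemma q_pochhammer_X_4n:
  "(\<Prod>m<n. (1 - fps_X ^ (4 * m + 4 - 1)) * (1 - fps_X ^ (4 * m + 1))) *
    q_pochhammer (fps_X ^ 2) (2 * n) = q_pochhammer (fps_X :: 'a::comm_ring_1 fps) (4 * n)"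
proof (induction n)
  case (Suc n)
  have e: "4 * n + 4 - 1 = Suc (Suc (Suc (4 * n)))" "4 * n + 1 = Suc (4 * n)"
    "2 * Suc (2 * n) = Suc (Suc (4 * n))" "2 * Suc (Suc (2 * n)) = Suc (Suc (Suc (Suc (4 * n))))"
    "4 * Suc n = Suc (Suc (Suc (Suc (4 * n))))" "2 * Suc n = Suc (Suc (2 * n))"
    by simp_all
  have new_factors: "(1 - fps_X ^ (4 * n + 4 - 1)) * (1 - fps_X ^ (4 * n + 1)) *
      ((1 - (fps_X ^ 2) ^ Suc (2 * n)) * (1 - (fps_X ^ 2) ^ Suc (Suc (2 * n)))) =
      (1 - fps_X ^ Suc (4 * n)) * (1 - fps_X ^ Suc (Suc (4 * n))) *
      (1 - fps_X ^ Suc (Suc (Suc (4 * n)))) * (1 - fps_X ^ Suc (Suc (Suc (Suc (4 * n)))) :: 'a fps)"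
    by (simp only: e(1-4) power_mult [symmetric]) (simp only: mult_ac)
  have "(\<Prod>m<Suc n. (1 - fps_X ^ (4 * m + 4 - 1)) * (1 - fps_X ^ (4 * m + 1))) *
      q_pochhammer (fps_X ^ 2) (2 * Suc n) =
      ((\<Prod>m<n. (1 - fps_X ^ (4 * m + 4 - 1)) * (1 - fps_X ^ (4 * m + 1))) *
        q_pochhammer (fps_X ^ 2) (2 * n)) *
      ((1 - fps_X ^ (4 * n + 4 - 1)) * (1 - fps_X ^ (4 * n + 1)) *
      ((1 - (fps_X ^ 2) ^ Suc (2 * n)) * (1 - (fps_X ^ 2) ^ Suc (Suc (2 * n)))) :: 'a fps)"
    unfolding e(6) by (simp only: prod.lessThan_Suc q_pochhammer_Suc mult_ac)
  also have "\<dots> = q_pochhammer fps_X (4 * Suc n)"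
    unfolding Suc.IH new_factors by (simp only: e(5) q_pochhammer_Suc mult.assoc)
  finally show ?case .
qed simp

text \<open>As \<open>k\<close> ranges over the integers, \<open>k (2k + 1)\<close> runs once through the triangular numbers
  and \<open>k (3k + 1) / 2\<close> through the generalised pentagonal numbers.\<close>

definition pentagonal_series :: "'a::comm_ring_1 fps" where
  "pentagonal_series = Abs_fps (\<lambda>i. of_bool (\<exists>k::int. 2 * int i = k * (3 * k + 1)))"

definition triangular_series :: "'a::comm_ring_1 fps" where
  "triangular_series = Abs_fps (\<lambda>i. of_bool (\<exists>k::int. int i = k * (2 * k + 1)))"

lemma card_inj_fiber:
  assumes "inj h"
  shows "card {k. c = h k} = of_bool (\<exists>k. c = h k)"
proof (cases "\<exists>k. c = h k")
  case True
  then obtain k where "c = h k"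
    by blast
  then have "{k. c = h k} = {k}"
    using assms by (auto dest: injD)
  then show ?thesis
    using True by simp
qed simp

lemma inj_times_linear:
  fixes a :: int
  assumes "a \<ge> 2"
  shows "inj (\<lambda>k. k * (a * k + 1))"
proof (rule injI)
  fix k l :: int
  assume "k * (a * k + 1) = l * (a * l + 1)"
  then have "(k - l) * (a * (k + l) + 1) = 0"
    by algebra
  moreover have "a * (k + l) + 1 \<noteq> 0"
  proof
    assume "a * (k + l) + 1 = 0"
    then have "a * (- (k + l)) = 1"
      by (simp add: algebra_simps)
    then show False
      using assms by (simp add: zmult_eq_1_iff)
  qed
  ultimately show "k = l"
    by simp
qed

lemma jtp_series_3: "jtp_series 3 = pentagonal_series"
proof -
  have "int 3 * k * (k + 1) - 2 * k = k * (3 * k + 1)" for k :: int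
    by (simp add: algebra_simps)
  then show ?thesis
    using inj_times_linear [of 3]
    by (simp add: jtp_series_def pentagonal_series_def card_inj_fiber)
qed

lemma jtp_series_4: "jtp_series 4 = triangular_series"
proof -
  have "int 4 * k * (k + 1) - 2 * k = 2 * (k * (2 * k + 1))" for k :: int
    by (simp add: algebra_simps)
  then show ?thesis
    using inj_times_linear [of 2]
    by (simp add: jtp_series_def triangular_series_def card_inj_fiber)
qed

theorem euler_pentagonal_mod_2:
  "trunc_eq (Suc L) (q_pochhammer (fps_X :: bit fps) L) pentagonal_series"
proof -
  define n where "n = 2 * Suc L"
  have "trunc_eq (Suc L) (q_pochhammer fps_X L) (q_pochhammer (fps_X :: bit fps) (3 * n))"
    by (rule trunc_eq_q_pochhammer_X) (simp add: n_def)
  also have "q_pochhammer (fps_X :: bit fps) (3 * n) =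
      q_pochhammer (fps_X ^ 3) n *
        (\<Prod>m<n. (1 + fps_X ^ (3 * m + 3 - 1)) * (1 + fps_X ^ (3 * m + 1)))"
    by (simp add: q_pochhammer_X_3n [symmetric] bit_fps_one_plus)
  also have "trunc_eq (Suc L) \<dots> pentagonal_series"
    unfolding jtp_series_3 [symmetric] by (rule jacobi_triple_product_trunc) (simp_all add: n_def)
  finally show ?thesis .
qed

text \<open>Modulo 2, \<open>\<Prod>\<^sub>m (1 + q^(4m - 1)) (1 + q^(4m - 3)) = f\<^sub>1 / f\<^sub>2 = 1 / f\<^sub>1\<close> and
  \<open>f\<^sub>4 = f\<^sub>1^4\<close>, so the case \<open>r = 4\<close> of the triple product is \<open>f\<^sub>1^3\<close>.\<close>

theorem jacobi_mod_2:
  "trunc_eq (Suc L) (q_pochhammer (fps_X :: bit fps) L ^ 3) triangular_series"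
proof -
  define n where "n = 2 * Suc L"
  let ?F = "q_pochhammer (fps_X :: bit fps)"
  let ?P = "q_pochhammer (fps_X ^ 4 :: bit fps) n *
    (\<Prod>m<n. (1 + fps_X ^ (4 * m + 4 - 1)) * (1 + fps_X ^ (4 * m + 1)))"
  have unit: "?F m ^ 2 * inverse (?F m ^ 2) = 1" for m
    by (simp add: inverse_mult_eq_1')
  have "?P * ?F (2 * n) ^ 2 = q_pochhammer (fps_X ^ 4) n *
      ((\<Prod>m<n. (1 - fps_X ^ (4 * m + 4 - 1)) * (1 - fps_X ^ (4 * m + 1))) *
        q_pochhammer (fps_X ^ 2) (2 * n))"
    by (simp only: bit_fps_one_plus bit_q_pochhammer_square mult.assoc)
  also have "\<dots> = ?F n ^ 4 * ?F (4 * n)"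
    by (simp only: q_pochhammer_X_4n bit_q_pochhammer_power_4)
  finally have P_eq: "?P * ?F (2 * n) ^ 2 = ?F n ^ 4 * ?F (4 * n)" .
  have approx: "trunc_eq (Suc L) (?F m) (?F L)" if "L \<le> m" for m
    using trunc_eq_q_pochhammer_X [OF that] by (rule trunc_eq_sym)
  have "?P = ?P * (?F (2 * n) ^ 2 * inverse (?F (2 * n) ^ 2))"
    by (simp add: unit)
  also have "\<dots> = ?F n ^ 4 * ?F (4 * n) * inverse (?F (2 * n) ^ 2)"
    by (simp only: mult.assoc [symmetric] P_eq)
  also have "trunc_eq (Suc L) \<dots> (?F L ^ 4 * ?F L * inverse (?F L ^ 2))"
    by (intro trunc_eq_mult trunc_eq_power trunc_eq_inverse approx) (simp_all add: n_def)
  also have "?F L ^ 4 * ?F L * inverse (?F L ^ 2) = ?F L ^ 3 * (?F L ^ 2 * inverse (?F L ^ 2))"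
    by (simp add: eval_nat_numeral mult_ac)
  finally have "trunc_eq (Suc L) ?P (?F L ^ 3)"
    by (simp add: unit)
  moreover have "trunc_eq (Suc L) ?P triangular_series"
    unfolding jtp_series_4 [symmetric] by (rule jacobi_triple_product_trunc) (simp_all add: n_def)
  ultimately show ?thesis
    by (rule trunc_eq_trans [OF trunc_eq_sym])
qed

section \<open>The 3-dissection of the triangular series\<close>

lemma int_mod_3_cases:
  fixes k :: int
  obtains a where "k = 3 * a" | a where "k = 3 * a + 1" | a where "k = 3 * a + 2"
proof -
  have "\<exists>a. k = 3 * a \<or> k = 3 * a + 1 \<or> k = 3 * a + 2"
    by presburger
  then show ?thesis
    using that by blast
qed

lemma int_mod_2_cases:
  fixes k :: int
  obtains b where "k = 2 * b" | b where "k = 2 * b + 1"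
proof -
  have "\<exists>b. k = 2 * b \<or> k = 2 * b + 1"
    by presburger
  then show ?thesis
    using that by blast
qed

lemma not_triangular_3_plus_2: "\<not> (\<exists>k::int. int (3 * u + 2) = k * (2 * k + 1))"
proof
  assume "\<exists>k::int. int (3 * u + 2) = k * (2 * k + 1)"
  then obtain k :: int where k: "3 * int u + 2 = k * (2 * k + 1)"
    by (auto simp: add.commute)
  show False
  proof (cases k rule: int_mod_3_cases)
    case (1 a)
    then have "3 * int u + 2 = 3 * (a * (6 * a + 1))"
      using k by (simp add: algebra_simps)
    then show False
      by presburger
  next
    case (2 a)
    then have "3 * int u + 2 = 3 * ((3 * a + 1) * (2 * a + 1))"
      using k by (simp add: algebra_simps)
    then show False
      by presburger
  next
    case (3 a)
    then have "3 * int u + 2 = 3 * (3 * (a + 1) * (2 * a + 1)) + 1"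
      using k by (simp add: algebra_simps)
    then show False
      by presburger
  qed
qed

lemma triangular_3_iff_pentagonal:
  "(\<exists>k::int. int (3 * u) = k * (2 * k + 1)) \<longleftrightarrow> (\<exists>k::int. 2 * int u = k * (3 * k + 1))"
proof
  assume "\<exists>k::int. int (3 * u) = k * (2 * k + 1)"
  then obtain k :: int where k: "3 * int u = k * (2 * k + 1)"
    by auto
  show "\<exists>k::int. 2 * int u = k * (3 * k + 1)"
  proof (cases k rule: int_mod_3_cases)
    case (1 a)
    then have "2 * int u = (2 * a) * (3 * (2 * a) + 1)"
      using k by (simp add: algebra_simps)
    then show ?thesis ..
  next
    case (2 a)
    then have "2 * int u = (- (2 * a + 1)) * (3 * (- (2 * a + 1)) + 1)"
      using k by (simp add: algebra_simps)
    then show ?thesis ..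
  next
    case (3 a)
    then have "3 * (3 * (a + 1) * (2 * a + 1)) + 1 = 3 * int u"
      using k by (simp add: algebra_simps)
    then have False
      by presburger
    then show ?thesis ..
  qed
next
  assume "\<exists>k::int. 2 * int u = k * (3 * k + 1)"
  then obtain k :: int where k: "2 * int u = k * (3 * k + 1)"
    by auto
  show "\<exists>k::int. int (3 * u) = k * (2 * k + 1)"
  proof (cases k rule: int_mod_2_cases)
    case (1 b)
    then have "int (3 * u) = (3 * b) * (2 * (3 * b) + 1)"
      using k by (simp add: algebra_simps)
    then show ?thesis ..
  next
    case (2 b)
    then have "int (3 * u) = (- (3 * b + 2)) * (2 * (- (3 * b + 2)) + 1)"
      using k by (simp add: algebra_simps)
    then show ?thesis ..
  qed
qed

lemma triangular_3_plus_1_iff: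
  "(\<exists>k::int. int (3 * u + 1) = k * (2 * k + 1)) \<longleftrightarrow>
    3 dvd u \<and> (\<exists>k::int. int (u div 3) = k * (2 * k + 1))"
proof
  assume "\<exists>k::int. int (3 * u + 1) = k * (2 * k + 1)"
  then obtain k :: int where k: "3 * int u + 1 = k * (2 * k + 1)"
    by (auto simp: add.commute)
  show "3 dvd u \<and> (\<exists>k::int. int (u div 3) = k * (2 * k + 1))"
  proof (cases k rule: int_mod_3_cases)
    case (1 a)
    then have "3 * int u + 1 = 3 * (a * (6 * a + 1))"
      using k by (simp add: algebra_simps)
    then have False
      by presburger
    then show ?thesis ..
  next
    case (2 a)
    then have "3 * int u + 1 = 3 * ((3 * a + 1) * (2 * a + 1))"
      using k by (simp add: algebra_simps)
    then have False
      by presburger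
    then show ?thesis ..
  next
    case (3 a)
    then have u: "int u = 3 * ((a + 1) * (2 * a + 1))"
      using k by (simp add: algebra_simps)
    then have "3 dvd u"
      by presburger
    moreover have "int (u div 3) = (- (a + 1)) * (2 * (- (a + 1)) + 1)"
      using u by (simp add: zdiv_int [symmetric] algebra_simps)
    ultimately show ?thesis
      by blast
  qed
next
  assume "3 dvd u \<and> (\<exists>k::int. int (u div 3) = k * (2 * k + 1))"
  then obtain v k where "u = 3 * v" "int v = k * (2 * k + 1)"
    by auto
  then have "int (3 * u + 1) = (- 3 * k - 1) * (2 * (- 3 * k - 1) + 1)"
    by (simp add: algebra_simps)
  then show "\<exists>k::int. int (3 * u + 1) = k * (2 * k + 1)" ..
qed

theorem triangular_series_3_dissection:
  "triangular_series =
    fps_dilate 3 pentagonal_series + fps_X * fps_dilate 9 (triangular_series :: 'a::idom fps)"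
proof (rule fps_ext)
  fix i :: nat
  have "\<exists>u. i = 3 * u \<or> i = 3 * u + 1 \<or> i = 3 * u + 2"
    by presburger
  then obtain u where "i = 3 * u \<or> i = 3 * u + 1 \<or> i = 3 * u + 2"
    by blast
  then show "triangular_series $ i =
      (fps_dilate 3 pentagonal_series + fps_X * fps_dilate 9 (triangular_series :: 'a fps)) $ i"
  proof (elim disjE)
    assume i: "i = 3 * u"
    have "u = 0 \<or> \<not> 9 dvd 3 * u - 1"
      by presburger
    then have "(fps_X * fps_dilate 9 (triangular_series :: 'a fps)) $ (3 * u) = 0"
      by (auto simp: fps_dilate_nth)
    moreover have "triangular_series $ (3 * u) = (pentagonal_series $ u :: 'a)"
      using triangular_3_iff_pentagonal [of u]
      by (simp add: triangular_series_def pentagonal_series_def)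
    ultimately show ?thesis
      using i by (simp add: fps_dilate_nth)
  next
    assume i: "i = 3 * u + 1"
    have "\<not> 3 dvd 3 * u + 1" "9 dvd 3 * u \<longleftrightarrow> 3 dvd u"
      by presburger+
    then have
      "(fps_dilate 3 pentagonal_series + fps_X * fps_dilate 9 triangular_series) $ (3 * u + 1) =
        (if 3 dvd u then triangular_series $ (u div 3) else (0 :: 'a))"
      by (simp add: fps_dilate_nth)
    moreover have "triangular_series $ (3 * u + 1) =
        (if 3 dvd u then triangular_series $ (u div 3) else (0 :: 'a))"
      using triangular_3_plus_1_iff [of u] by (simp add: triangular_series_def)
    ultimately show ?thesis
      using i by simp
  next
    assume i: "i = 3 * u + 2"
    have "\<not> 3 dvd 3 * u + 2" "\<not> 9 dvd 3 * u + 1"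
      by presburger+
    then show ?thesis
      using i not_triangular_3_plus_2 [of u]
      by (simp add: fps_dilate_nth triangular_series_def del: of_nat_add)
  qed
qed

section \<open>The generating functions modulo 2\<close>

lemma trunc_eq_prod_multiples:
  assumes "r > 0"
  shows "trunc_eq (Suc L) (\<Prod>a \<in> {a \<in> {1..L}. r dvd a}. 1 - fps_X ^ a)
    (fps_dilate r (q_pochhammer fps_X L :: 'a::idom fps))"
proof -
  have "{a \<in> {1..L}. r dvd a} = (\<lambda>j. r * j) ` {1..L div r}"
    using assms by (auto simp: less_eq_div_iff_mult_less_eq mult.commute [of r])
  then have "(\<Prod>a \<in> {a \<in> {1..L}. r dvd a}. 1 - fps_X ^ a) =
      q_pochhammer (fps_X ^ r :: 'a fps) (L div r)"
    using assms by (simp add: prod.reindex inj_on_def q_pochhammer_def power_mult)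
  also have "\<dots> = fps_dilate r (q_pochhammer fps_X (L div r))"
    using assms by (simp add: fps_dilate_q_pochhammer)
  finally have "(\<Prod>a \<in> {a \<in> {1..L}. r dvd a}. 1 - fps_X ^ a) =
      fps_dilate r (q_pochhammer fps_X (L div r) :: 'a fps)" .
  moreover have "trunc_eq (r * Suc (L div r)) (fps_dilate r (q_pochhammer fps_X (L div r)))
      (fps_dilate r (q_pochhammer fps_X L :: 'a fps))"
    using assms by (intro trunc_eq_dilate trunc_eq_q_pochhammer_X) simp_all
  moreover have "Suc L \<le> r * Suc (L div r)"
    using assms by (metis Suc_leI dividend_less_times_div mult_Suc_right)
  ultimately show ?thesis
    by (simp add: trunc_eq_mono)
qed

text \<open>Inclusion-exclusion over the multiples of 3 and 4 gives \<open>P f\<^sub>3 f\<^sub>4 = f\<^sub>1 f\<^sub>1\<^sub>2\<close>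
  for the product \<open>P\<close> over the remaining parts; modulo 2, \<open>f\<^sub>4 = f\<^sub>1^4\<close>.\<close>

lemma bit_trunc_eq_prod_not_3_4:
  fixes L :: nat
  defines "F \<equiv> q_pochhammer (fps_X :: bit fps) L"
  shows "trunc_eq (Suc L)
    ((\<Prod>a \<in> {a \<in> {1..L}. \<not> 3 dvd a \<and> \<not> 4 dvd a}. 1 - fps_X ^ a) * (fps_dilate 3 F * F ^ 4))
    (F * fps_dilate 3 F ^ 4)"
proof -
  let ?E = "\<lambda>A. \<Prod>a \<in> A. 1 - fps_X ^ a :: bit fps"
  let ?D = "\<lambda>k. {a \<in> {1..L}. k dvd a}"
  let ?A = "{a \<in> {1..L}. \<not> 3 dvd a \<and> \<not> 4 dvd a}"
  have "?E ?A * ?E (?D 3 \<union> ?D 4) = ?E (?A \<union> (?D 3 \<union> ?D 4))"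
    by (rule prod.union_disjoint [symmetric]) auto
  also have "\<dots> = F"
    unfolding F_def q_pochhammer_def by (rule prod.cong) auto
  finally have F_split: "F = ?E ?A * ?E (?D 3 \<union> ?D 4)" ..
  have "3 dvd a \<and> 4 dvd a \<longleftrightarrow> 12 dvd a" for a :: nat
    by presburger
  then have inter: "?E (?D 3 \<inter> ?D 4) = ?E (?D 12)"
    by (intro prod.cong) auto
  have "?E (?D 3 \<union> ?D 4) * ?E (?D 12) = ?E (?D 3) * ?E (?D 4)"
    unfolding inter [symmetric] by (rule prod.union_inter) auto
  then have split: "?E ?A * (?E (?D 3) * ?E (?D 4)) = F * ?E (?D 12)"
    unfolding F_split by (simp add: mult.assoc)
  have F4: "F ^ 4 = fps_dilate 4 F"
    unfolding F_def bit_q_pochhammer_power_4 by (rule fps_dilate_q_pochhammer [symmetric]) simp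
  have "fps_dilate 3 F ^ 4 = fps_dilate 3 (fps_dilate 4 F)"
    unfolding F4 [symmetric] by (rule fps_dilate_power [symmetric]) simp
  then have F12: "fps_dilate 12 F = fps_dilate 3 F ^ 4"
    by (simp add: fps_dilate_dilate)
  have "trunc_eq (Suc L) (?E (?D 12)) (fps_dilate 12 F)"
    unfolding F_def by (rule trunc_eq_prod_multiples) simp
  then have high: "trunc_eq (Suc L) (?E ?A * (?E (?D 3) * ?E (?D 4))) (F * fps_dilate 3 F ^ 4)"
    unfolding split F12 by (intro trunc_eq_mult trunc_eq_refl)
  have "trunc_eq (Suc L) (?E (?D 3)) (fps_dilate 3 F)"
    unfolding F_def by (rule trunc_eq_prod_multiples) simp
  moreover have "trunc_eq (Suc L) (?E (?D 4)) (F ^ 4)"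
    unfolding F4 unfolding F_def by (rule trunc_eq_prod_multiples) simp
  ultimately have
    "trunc_eq (Suc L) (?E ?A * (?E (?D 3) * ?E (?D 4))) (?E ?A * (fps_dilate 3 F * F ^ 4))"
    by (intro trunc_eq_mult trunc_eq_refl)
  then show ?thesis
    by (rule trunc_eq_trans [OF trunc_eq_sym high])
qed

lemma bit_q_pochhammer_dilate_3_square:
  "fps_dilate 3 (q_pochhammer (fps_X :: bit fps) L) ^ 2 = fps_dilate 6 (q_pochhammer fps_X L)"
proof -
  let ?F = "q_pochhammer (fps_X :: bit fps) L"
  have "fps_dilate 3 ?F ^ 2 = fps_dilate 3 (?F ^ 2)"
    by (rule fps_dilate_power [symmetric]) simp
  also have "?F ^ 2 = fps_dilate 2 ?F"
    by (simp add: bit_q_pochhammer_square fps_dilate_q_pochhammer)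
  also have "fps_dilate 3 (fps_dilate 2 ?F) = fps_dilate 6 ?F"
    by (subst fps_dilate_dilate) simp_all
  finally show ?thesis .
qed

lemma bit_trunc_eq_inverse_prod_not_3_4:
  fixes L :: nat
  defines "F \<equiv> q_pochhammer (fps_X :: bit fps) L"
  shows "trunc_eq (Suc L) (inverse (\<Prod>a \<in> {a \<in> {1..L}. \<not> 3 dvd a \<and> \<not> 4 dvd a}. 1 - fps_X ^ a))
    (fps_dilate 6 (inverse F) + fps_X * fps_dilate 3 (fps_dilate 3 F ^ 3 * inverse F ^ 3))"
proof -
  let ?F3 = "fps_dilate 3 F"
  have F0: "F $ 0 = 1" "?F3 $ 0 = 1"
    by (simp_all add: F_def fps_dilate_nth)
  have "trunc_eq (Suc L) (inverse (\<Prod>a \<in> {a \<in> {1..L}. \<not> 3 dvd a \<and> \<not> 4 dvd a}. 1 - fps_X ^ a))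
      ((?F3 * F ^ 4) * inverse (F * ?F3 ^ 4))"
    by (rule trunc_eq_inverse_solve [OF bit_trunc_eq_prod_not_3_4 [of L, folded F_def]])
      (simp_all add: F0 fps_prod_nth_0)
  also have "(?F3 * F ^ 4) * inverse (F * ?F3 ^ 4) = F ^ 3 * inverse ?F3 ^ 3"
    using F0 by (simp add: fps_inverse_mult fps_inverse_power inverse_mult_eq_1' eval_nat_numeral
        mult_ac)
  also have "trunc_eq (Suc L) \<dots> (triangular_series * inverse ?F3 ^ 3)"
    unfolding F_def using jacobi_mod_2 by (rule trunc_eq_mult) simp
  also have "triangular_series =
      (fps_dilate 3 pentagonal_series + fps_X * fps_dilate 9 triangular_series :: bit fps)"
    by (rule triangular_series_3_dissection)
  also have "trunc_eq (Suc L)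
      ((fps_dilate 3 pentagonal_series + fps_X * fps_dilate 9 triangular_series) * inverse ?F3 ^ 3)
      ((?F3 + fps_X * fps_dilate 9 (F ^ 3)) * inverse ?F3 ^ 3)"
  proof (intro trunc_eq_mult trunc_eq_add trunc_eq_refl)
    show "trunc_eq (Suc L) (fps_dilate 3 pentagonal_series) ?F3"
      using trunc_eq_dilate [OF _ trunc_eq_sym [OF euler_pentagonal_mod_2], of 3 L]
      by (auto simp: F_def intro: trunc_eq_mono)
    show "trunc_eq (Suc L) (fps_dilate 9 triangular_series) (fps_dilate 9 (F ^ 3))"
      using trunc_eq_dilate [OF _ trunc_eq_sym [OF jacobi_mod_2], of 9 L]
      by (auto simp: F_def intro: trunc_eq_mono)
  qed
  also have "(?F3 + fps_X * fps_dilate 9 (F ^ 3)) * inverse ?F3 ^ 3 =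
      fps_dilate 6 (inverse F) + fps_X * fps_dilate 3 (?F3 ^ 3 * inverse F ^ 3)"
  proof -
    have "?F3 * inverse ?F3 = 1"
      using F0 by (simp add: inverse_mult_eq_1')
    then have "?F3 * inverse ?F3 ^ 3 = inverse (?F3 ^ 2)"
      by (simp add: fps_inverse_mult power3_eq_cube power2_eq_square mult.assoc [symmetric])
    also have "\<dots> = fps_dilate 6 (inverse F)"
      using F0 by (simp add: F_def bit_q_pochhammer_dilate_3_square fps_dilate_inverse)
    finally show ?thesis
      using F0 by (simp add: distrib_right fps_dilate_mult fps_dilate_power fps_dilate_inverse
          fps_dilate_dilate mult.assoc)
  qed
  finally show ?thesis .
qed

lemma of_nat_b2_34_even:
  assumes "2 * m \<le> L"
  shows "(of_nat (b2_34 (2 * m)) :: bit) =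
    inverse (\<Prod>a \<in> {a \<in> {1..L}. \<not> 3 dvd a \<and> \<not> 4 dvd a}. 1 - fps_X ^ a) $ m"
proof -
  let ?P = "\<Prod>a \<in> {a \<in> {1..L}. \<not> 3 dvd a \<and> \<not> 4 dvd a}. 1 - fps_X ^ a :: bit fps"
  have "?P ^ 2 = fps_dilate 2 ?P"
    by (simp add: prod_power_distrib bit_fps_one_minus_Xpow_square fps_dilate_prod
        fps_dilate_one_minus_Xpow)
  then have square: "inverse ?P ^ 2 = fps_dilate 2 (inverse ?P)"
    by (simp add: fps_inverse_power [symmetric] fps_dilate_inverse fps_prod_nth_0)
  have "(of_nat (b2_34 (2 * m)) :: bit) = (inverse ?P ^ 2) $ (2 * m)"
    unfolding b2_34_def using assms by (rule of_nat_card_colored_partitions_inverse)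
  also have "\<dots> = inverse ?P $ m"
    unfolding square by (simp add: fps_dilate_nth)
  finally show ?thesis .
qed

lemma of_nat_b3_3:
  assumes "n \<le> L"
  shows "(of_nat (b3_3 n) :: 'a::field) =
    (fps_dilate 3 (q_pochhammer fps_X L) ^ 3 * inverse (q_pochhammer fps_X L) ^ 3) $ n"
proof -
  let ?P = "\<Prod>a \<in> {a \<in> {1..L}. \<not> 3 dvd a}. 1 - fps_X ^ a :: 'a fps"
  let ?F = "q_pochhammer (fps_X :: 'a fps) L"
  have "?P * (\<Prod>a \<in> {a \<in> {1..L}. 3 dvd a}. 1 - fps_X ^ a) = ?F"
    unfolding q_pochhammer_def by (subst prod.union_disjoint [symmetric]) (auto intro!: prod.cong)
  moreover have "trunc_eq (Suc L) (fps_dilate 3 ?F) (\<Prod>a \<in> {a \<in> {1..L}. 3 dvd a}. 1 - fps_X ^ a)"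
    by (rule trunc_eq_sym, rule trunc_eq_prod_multiples) simp
  then have "trunc_eq (Suc L) (?P * fps_dilate 3 ?F)
      (?P * (\<Prod>a \<in> {a \<in> {1..L}. 3 dvd a}. 1 - fps_X ^ a))"
    by (intro trunc_eq_mult trunc_eq_refl)
  ultimately have "trunc_eq (Suc L) (?P * fps_dilate 3 ?F) ?F"
    by simp
  then have "trunc_eq (Suc L) (inverse ?P) (fps_dilate 3 ?F * inverse ?F)"
    by (rule trunc_eq_inverse_solve) (simp_all add: fps_prod_nth_0 fps_dilate_nth)
  then have "trunc_eq (Suc L) (inverse ?P ^ 3) (fps_dilate 3 ?F ^ 3 * inverse ?F ^ 3)"
    unfolding power_mult_distrib [symmetric] by (rule trunc_eq_power)
  then have "(inverse ?P ^ 3) $ n = (fps_dilate 3 ?F ^ 3 * inverse ?F ^ 3) $ n"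
    by (rule trunc_eq_coeff) (use assms in simp)
  moreover have "(of_nat (b3_3 n) :: 'a) = (inverse ?P ^ 3) $ n"
    unfolding b3_3_def using assms by (rule of_nat_card_colored_partitions_inverse)
  ultimately show ?thesis
    by simp
qed

lemma of_nat_part_count:
  assumes "n \<le> L"
  shows "(of_nat (part_count n) :: 'a::field) = inverse (q_pochhammer fps_X L) $ n"
proof -
  have "(\<Prod>a \<in> {a \<in> {1..L}. True}. 1 - fps_X ^ a) = q_pochhammer (fps_X :: 'a fps) L"
    unfolding q_pochhammer_def by (rule prod.cong) auto
  moreover have "(of_nat (part_count n) :: 'a) =
      (inverse (\<Prod>a \<in> {a \<in> {1..L}. True}. 1 - fps_X ^ a) ^ 1) $ n"
    unfolding part_count_def using assms by (rule of_nat_card_colored_partitions_inverse)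
  ultimately show ?thesis
    by simp
qed

lemma of_nat_bit_eq_iff_cong: "(of_nat a :: bit) = of_nat b \<longleftrightarrow> [a = b] (mod 2)"
proof -
  have "(of_nat m :: bit) = of_bool (odd m)" for m
    by (induction m) auto
  then have "(of_nat a :: bit) = of_nat b \<longleftrightarrow> (odd a \<longleftrightarrow> odd b)"
    by simp
  also have "\<dots> \<longleftrightarrow> [a = b] (mod 2)"
    unfolding cong_def by presburger
  finally show ?thesis .
qed

theorem mainTheorem5:
  fixes n :: nat
  assumes "n \<ge> 1"
  shows "[b2_34 (6*n+4) = 0] (mod 2) \<and>
         [b2_34 (6*n+2) = b3_3 n] (mod 2) \<and>
         [b2_34 (12*n+6) = 0] (mod 2) \<and>
         [b2_34 (12*n) = part_count n] (mod 2)"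
proof -
  define L where "L = 12 * n + 6"
  define F where "F = q_pochhammer (fps_X :: bit fps) L"
  define C where
    "C = fps_dilate 6 (inverse F) + fps_X * fps_dilate 3 (fps_dilate 3 F ^ 3 * inverse F ^ 3)"
  have b2: "(of_nat (b2_34 (2 * m)) :: bit) = C $ m" if "2 * m \<le> L" for m
    using of_nat_b2_34_even [OF that] that
      trunc_eq_coeff [OF bit_trunc_eq_inverse_prod_not_3_4, of m L]
    by (simp add: C_def F_def)
  have "\<not> 6 dvd 3 * n + 2" "\<not> 3 dvd 3 * n + 1" "\<not> 6 dvd 3 * n + 1" "\<not> 6 dvd 6 * n + 3"
    "\<not> 3 dvd 6 * n + 2" "\<not> 3 dvd 6 * n - 1"
    using assms by presburger+
  then have "C $ (3 * n + 2) = 0" "C $ (3 * n + 1) = of_nat (b3_3 n)" "C $ (6 * n + 3) = 0"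
    "C $ (6 * n) = of_nat (part_count n)"
    using of_nat_b3_3 [where 'a = bit, of n L] of_nat_part_count [where 'a = bit, of n L] assms
    by (simp_all add: C_def F_def L_def fps_dilate_nth)
  then have "(of_nat (b2_34 (2 * (3 * n + 2))) :: bit) = of_nat 0"
    "(of_nat (b2_34 (2 * (3 * n + 1))) :: bit) = of_nat (b3_3 n)"
    "(of_nat (b2_34 (2 * (6 * n + 3))) :: bit) = of_nat 0"
    "(of_nat (b2_34 (2 * (6 * n))) :: bit) = of_nat (part_count n)"
    using b2 [of "3 * n + 2"] b2 [of "3 * n + 1"] b2 [of "6 * n + 3"] b2 [of "6 * n"]
    by (simp_all add: L_def)
  moreover have "6 * n + 4 = 2 * (3 * n + 2)" "6 * n + 2 = 2 * (3 * n + 1)"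
    "12 * n + 6 = 2 * (6 * n + 3)" "12 * n = 2 * (6 * n)"
    by simp_all
  ultimately show ?thesis
    by (simp only: of_nat_bit_eq_iff_cong)
qed

end
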